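(* Let $P$ be a $\mathcal{V}$-poset. If $P$ is not linearly ordered, then neither a greatest element nor a least element of $P$ (if it exists) is basic; if $P$ is a nonempty linearly ordered set, its least element is basic. Moreover, the status of elements does not change under the three operations generating $\mathcal{V}$-posets, except for linearly ordered sets: if $P'$ is obtained as a disjoint union of $\mathcal{V}$-posets, or by adding a new greatest element to a $\mathcal{V}$-poset $P$, or by adding a new least element to a $\mathcal{V}$-poset $P$ that is not linearly ordered, then every element of the original poset(s) that is basic (respectively non-basic, upper, lower) remains basic (respectively non-basic, upper, lower) in $P'$.
   Context: All posets are finite. A $\mathcal{V}$-poset is a poset that can be generated from the empty poset by repeatedly applying the operations: (1) disjoint union of $\mathcal{V}$-posets, (2) adding a new greatest element, (3) adding a new least element. An element $x$ of a $\mathcal{V}$-poset is basic if: (B.1) there are no two incomparable elements $u,v$ with $x>u$ and $x>v$; (B.2) there are no two incomparable elements $u,v$ with $x<u$ and $x<v$; (B.3) there is no element $u$ with $u<x$ such that for all $w\neq u,x$ one has ($u\ge w\iff x\ge w$) and ($u\le w\iff x\le w$). A non-basic element $u$ is an upper element if $u>b$ for some basic element $b$, and a lower element if $u<b$ for some basic element $b$. *)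

theory Defs
  imports Main
begin

(* A finite poset is represented by a carrier set S and its order relation R :: 'a rel,
   where (x, y) \<in> R means x \<le> y.  R \<subseteq> S \<times> S. *)

inductive vposet :: "'a set \<Rightarrow> 'a rel \<Rightarrow> bool" where
  empty: "vposet {} {}"
| union: "vposet A R \<Longrightarrow> vposet B Q \<Longrightarrow> A \<inter> B = {} \<Longrightarrow> vposet (A \<union> B) (R \<union> Q)"
| add_top: "vposet A R \<Longrightarrow> t \<notin> A \<Longrightarrow> vposet (insert t A) (R \<union> (insert t A) \<times> {t})"
| add_bot: "vposet A R \<Longrightarrow> b \<notin> A \<Longrightarrow> vposet (insert b A) (R \<union> {b} \<times> (insert b A))"

definition linear_on :: "'a set \<Rightarrow> 'a rel \<Rightarrow> bool" where
  "linear_on S R \<longleftrightarrow> (\<forall>x\<in>S. \<forall>y\<in>S. (x, y) \<in> R \<or> (y, x) \<in> R)"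

definition basic :: "'a set \<Rightarrow> 'a rel \<Rightarrow> 'a \<Rightarrow> bool" where
  "basic S R x \<longleftrightarrow> x \<in> S
     \<and> \<not> (\<exists>u\<in>S. \<exists>v\<in>S. (u, x) \<in> R \<and> u \<noteq> x \<and> (v, x) \<in> R \<and> v \<noteq> x
                 \<and> (u, v) \<notin> R \<and> (v, u) \<notin> R)
     \<and> \<not> (\<exists>u\<in>S. \<exists>v\<in>S. (x, u) \<in> R \<and> u \<noteq> x \<and> (x, v) \<in> R \<and> v \<noteq> x
                 \<and> (u, v) \<notin> R \<and> (v, u) \<notin> R)
     \<and> \<not> (\<exists>u\<in>S. (u, x) \<in> R \<and> u \<noteq> x \<and>
             (\<forall>w\<in>S. w \<noteq> u \<and> w \<noteq> x \<longrightarrow>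
                ((w, u) \<in> R \<longleftrightarrow> (w, x) \<in> R) \<and> ((u, w) \<in> R \<longleftrightarrow> (x, w) \<in> R)))"

definition upper :: "'a set \<Rightarrow> 'a rel \<Rightarrow> 'a \<Rightarrow> bool" where
  "upper S R x \<longleftrightarrow> x \<in> S \<and> \<not> basic S R x \<and> (\<exists>b\<in>S. basic S R b \<and> (b, x) \<in> R \<and> b \<noteq> x)"

definition lower :: "'a set \<Rightarrow> 'a rel \<Rightarrow> 'a \<Rightarrow> bool" where
  "lower S R x \<longleftrightarrow> x \<in> S \<and> \<not> basic S R x \<and> (\<exists>b\<in>S. basic S R b \<and> (x, b) \<in> R \<and> b \<noteq> x)"

definition status_preserved :: "'a set \<Rightarrow> 'a rel \<Rightarrow> 'a set \<Rightarrow> 'a rel \<Rightarrow> 'a \<Rightarrow> bool" where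
  "status_preserved S R S' R' x \<longleftrightarrow>
     (basic S R x \<longrightarrow> basic S' R' x)
   \<and> (\<not> basic S R x \<longrightarrow> \<not> basic S' R' x)
   \<and> (upper S R x \<longrightarrow> upper S' R' x)
   \<and> (lower S R x \<longrightarrow> lower S' R' x)"

end

theory Submission
  imports Defs
begin

text \<open>
  A greatest (least) element of a poset that is not a chain lies above (below) two incomparable
  elements, so it violates (B.1) ((B.2)); in a chain (B.1) and (B.2) hold vacuously and, by
  antisymmetry, the least element has no strictly smaller twin.
  Each generating operation adds elements that are unrelated to all old elements, or lie above
  all elements, or lie below all elements. Such elements can never be one of two incomparable
  witnesses for (B.1) or (B.2), and they relate to an old element and to its twin in the same
  way, so they do not affect (B.3) either. The only new twin that can appear is a new least
  element below an old least element, and this is harmless when the old poset is not a chain,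
  since then its least element was not basic anyway.
\<close>

lemma vposet_field: "vposet S R \<Longrightarrow> R \<subseteq> S \<times> S"
  by (induction rule: vposet.induct) auto

lemma vposet_refl_on: "vposet S R \<Longrightarrow> refl_on S R"
  unfolding refl_on_def by (induction rule: vposet.induct) auto

lemma vposet_antisym: "vposet S R \<Longrightarrow> antisym R"
  unfolding antisym_def
proof (induction rule: vposet.induct)
  case (union A R B Q)
  then show ?case using vposet_field[OF union.hyps(1)] vposet_field[OF union.hyps(2)] by blast
next
  case (add_top A R t)
  then show ?case using vposet_field[OF add_top.hyps(1)] by blast
next
  case (add_bot A R b)
  then show ?case using vposet_field[OF add_bot.hyps(1)] by blast
qed auto

definition forks_below :: "'a set \<Rightarrow> 'a rel \<Rightarrow> 'a \<Rightarrow> bool" where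
  "forks_below S R x \<longleftrightarrow> (\<exists>u\<in>S. \<exists>v\<in>S. (u, x) \<in> R \<and> u \<noteq> x \<and> (v, x) \<in> R \<and> v \<noteq> x
     \<and> (u, v) \<notin> R \<and> (v, u) \<notin> R)"

definition forks_above :: "'a set \<Rightarrow> 'a rel \<Rightarrow> 'a \<Rightarrow> bool" where
  "forks_above S R x \<longleftrightarrow> (\<exists>u\<in>S. \<exists>v\<in>S. (x, u) \<in> R \<and> u \<noteq> x \<and> (x, v) \<in> R \<and> v \<noteq> x
     \<and> (u, v) \<notin> R \<and> (v, u) \<notin> R)"

definition lower_twin :: "'a set \<Rightarrow> 'a rel \<Rightarrow> 'a \<Rightarrow> 'a \<Rightarrow> bool" where
  "lower_twin S R x u \<longleftrightarrow> u \<in> S \<and> (u, x) \<in> R \<and> u \<noteq> x \<and>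
     (\<forall>w\<in>S. w \<noteq> u \<and> w \<noteq> x \<longrightarrow> ((w, u) \<in> R \<longleftrightarrow> (w, x) \<in> R) \<and> ((u, w) \<in> R \<longleftrightarrow> (x, w) \<in> R))"

lemma basic_iff:
  "basic S R x \<longleftrightarrow> x \<in> S \<and> \<not> forks_below S R x \<and> \<not> forks_above S R x \<and> \<not> (\<exists>u. lower_twin S R x u)"
  unfolding basic_def forks_below_def forks_above_def lower_twin_def by blast

lemma greatest_not_basic:
  assumes "\<not> linear_on S R" and "\<forall>x\<in>S. (x, g) \<in> R"
  shows "\<not> basic S R g"
  using assms unfolding linear_on_def basic_def by blast

lemma least_not_basic:
  assumes "\<not> linear_on S R" and "\<forall>x\<in>S. (l, x) \<in> R"
  shows "\<not> basic S R l"
  using assms unfolding linear_on_def basic_def by blast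

lemma least_basic_if_linear:
  assumes "antisym R" and "linear_on S R" and "l \<in> S" and "\<forall>x\<in>S. (l, x) \<in> R"
  shows "basic S R l"
  using assms unfolding antisym_def linear_on_def basic_def by blast

definition isolated_or_extreme_extension :: "'a set \<Rightarrow> 'a rel \<Rightarrow> 'a set \<Rightarrow> 'a rel \<Rightarrow> bool" where
  "isolated_or_extreme_extension S R S' R' \<longleftrightarrow> S \<subseteq> S'
     \<and> (\<forall>u\<in>S. \<forall>v\<in>S. (u, v) \<in> R' \<longleftrightarrow> (u, v) \<in> R)
     \<and> (\<forall>z\<in>S' - S. (\<forall>w\<in>S. (z, w) \<notin> R' \<and> (w, z) \<notin> R')
                  \<or> (\<forall>w\<in>S'. (w, z) \<in> R') \<or> (\<forall>w\<in>S'. (z, w) \<in> R'))"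

lemma disjoint_union_extension:
  assumes "R \<subseteq> A \<times> A" and "Q \<subseteq> B \<times> B" and "A \<inter> B = {}"
  shows "isolated_or_extreme_extension A R (A \<union> B) (R \<union> Q)"
  using assms unfolding isolated_or_extreme_extension_def by blast

lemma add_top_extension:
  assumes "t \<notin> A"
  shows "isolated_or_extreme_extension A R (insert t A) (R \<union> insert t A \<times> {t})"
  using assms unfolding isolated_or_extreme_extension_def by blast

lemma add_bot_extension:
  assumes "b \<notin> A"
  shows "isolated_or_extreme_extension A R (insert b A) (R \<union> {b} \<times> insert b A)"
  using assms unfolding isolated_or_extreme_extension_def by blast

lemma extension_subset: "isolated_or_extreme_extension S R S' R' \<Longrightarrow> S \<subseteq> S'"
  unfolding isolated_or_extreme_extension_def by blast

lemma extension_restrict: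
  "isolated_or_extreme_extension S R S' R' \<Longrightarrow> u \<in> S \<Longrightarrow> v \<in> S \<Longrightarrow> (u, v) \<in> R' \<longleftrightarrow> (u, v) \<in> R"
  unfolding isolated_or_extreme_extension_def by blast

lemma extension_new_cases:
  assumes "isolated_or_extreme_extension S R S' R'" and "z \<in> S' - S"
  obtains (isolated) "\<forall>w\<in>S. (z, w) \<notin> R' \<and> (w, z) \<notin> R'"
    | (greatest) "\<forall>w\<in>S'. (w, z) \<in> R'"
    | (least) "\<forall>w\<in>S'. (z, w) \<in> R'"
  using assms unfolding isolated_or_extreme_extension_def by blast

lemma extension_incomparable_old:
  assumes "isolated_or_extreme_extension S R S' R'" and "y \<in> S" and "u \<in> S'" and "v \<in> S'"
    and "(u, y) \<in> R' \<or> (y, u) \<in> R'" and "(u, v) \<notin> R'" and "(v, u) \<notin> R'"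
  shows "u \<in> S"
  using assms unfolding isolated_or_extreme_extension_def by blast

lemma forks_below_extension_iff:
  assumes ext: "isolated_or_extreme_extension S R S' R'" and y: "y \<in> S"
  shows "forks_below S' R' y \<longleftrightarrow> forks_below S R y"
proof -
  note sub = extension_subset[OF ext] and res = extension_restrict[OF ext]
  show ?thesis
  proof
    assume "forks_below S' R' y"
    then obtain u v where uv: "u \<in> S'" "v \<in> S'" "(u, y) \<in> R'" "u \<noteq> y" "(v, y) \<in> R'" "v \<noteq> y"
      "(u, v) \<notin> R'" "(v, u) \<notin> R'"
      unfolding forks_below_def by blast
    have "u \<in> S" "v \<in> S"
      using extension_incomparable_old[OF ext y] uv by blast+
    with uv y res show "forks_below S R y" unfolding forks_below_def by blast
  next
    assume "forks_below S R y"
    with y sub res show "forks_below S' R' y" unfolding forks_below_def by blast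
  qed
qed

lemma forks_above_extension_iff:
  assumes ext: "isolated_or_extreme_extension S R S' R'" and y: "y \<in> S"
  shows "forks_above S' R' y \<longleftrightarrow> forks_above S R y"
proof -
  note sub = extension_subset[OF ext] and res = extension_restrict[OF ext]
  show ?thesis
  proof
    assume "forks_above S' R' y"
    then obtain u v where uv: "u \<in> S'" "v \<in> S'" "(y, u) \<in> R'" "u \<noteq> y" "(y, v) \<in> R'" "v \<noteq> y"
      "(u, v) \<notin> R'" "(v, u) \<notin> R'"
      unfolding forks_above_def by blast
    have "u \<in> S" "v \<in> S"
      using extension_incomparable_old[OF ext y] uv by blast+
    with uv y res show "forks_above S R y" unfolding forks_above_def by blast
  next
    assume "forks_above S R y"
    with y sub res show "forks_above S' R' y" unfolding forks_above_def by blast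
  qed
qed

lemma extension_new_uniform:
  assumes ext: "isolated_or_extreme_extension S R S' R'" and anti: "antisym R'"
    and u: "u \<in> S" and y: "y \<in> S" and w: "w \<in> S' - S"
  shows "((w, u) \<in> R' \<longleftrightarrow> (w, y) \<in> R') \<and> ((u, w) \<in> R' \<longleftrightarrow> (y, w) \<in> R')"
proof -
  have old: "u \<in> S'" "y \<in> S'" using extension_subset[OF ext] u y by auto
  have "w \<noteq> u" "w \<noteq> y" using u y w by auto
  then have strict: "(w, v) \<in> R' \<Longrightarrow> (v, w) \<in> R' \<Longrightarrow> v \<in> {u, y} \<Longrightarrow> False" for v
    using anti unfolding antisym_def by blast
  from ext w show ?thesis
  proof (cases rule: extension_new_cases)
    case isolated
    then show ?thesis using u y by blast
  next
    case greatest
    then show ?thesis using old strict by blast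
  next
    case least
    then show ?thesis using old strict by blast
  qed
qed

lemma lower_twin_extension:
  assumes ext: "isolated_or_extreme_extension S R S' R'" and anti: "antisym R'"
    and y: "y \<in> S" and twin: "lower_twin S R y u"
  shows "lower_twin S' R' y u"
proof -
  note sub = extension_subset[OF ext] and res = extension_restrict[OF ext]
  have u: "u \<in> S" "(u, y) \<in> R" "u \<noteq> y"
    and old: "\<And>w. w \<in> S \<Longrightarrow> w \<noteq> u \<Longrightarrow> w \<noteq> y \<Longrightarrow>
      ((w, u) \<in> R \<longleftrightarrow> (w, y) \<in> R) \<and> ((u, w) \<in> R \<longleftrightarrow> (y, w) \<in> R)"
    using twin unfolding lower_twin_def by auto
  have "((w, u) \<in> R' \<longleftrightarrow> (w, y) \<in> R') \<and> ((u, w) \<in> R' \<longleftrightarrow> (y, w) \<in> R')"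
    if "w \<in> S'" "w \<noteq> u" "w \<noteq> y" for w
  proof (cases "w \<in> S")
    case True
    then show ?thesis using old[OF True that(2,3)] res u(1) y by simp
  next
    case False
    then show ?thesis using extension_new_uniform[OF ext anti u(1) y] that(1) by blast
  qed
  then show ?thesis using u sub res y unfolding lower_twin_def by blast
qed

lemma lower_twin_restrict:
  assumes ext: "isolated_or_extreme_extension S R S' R'" and anti: "antisym R'"
    and refl: "refl_on S R" and y: "y \<in> S" and twin: "lower_twin S' R' y u"
  shows "lower_twin S R y u \<or> u \<notin> S \<and> (\<forall>w\<in>S. (y, w) \<in> R)"
proof (cases "u \<in> S")
  case True
  with y twin extension_subset[OF ext] extension_restrict[OF ext]
  show ?thesis unfolding lower_twin_def by (metis subsetD)
next
  case False
  note sub = extension_subset[OF ext] and res = extension_restrict[OF ext]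
  have u: "u \<in> S' - S" "(u, y) \<in> R'" "u \<noteq> y"
    and new: "\<And>w. w \<in> S' \<Longrightarrow> w \<noteq> u \<Longrightarrow> w \<noteq> y \<Longrightarrow> (u, w) \<in> R' \<longleftrightarrow> (y, w) \<in> R'"
    using twin False unfolding lower_twin_def by auto
  have "(y, u) \<notin> R'" using anti u unfolding antisym_def by blast
  have u_least: "\<forall>w\<in>S'. (u, w) \<in> R'"
    using ext u(1)
  proof (cases rule: extension_new_cases)
    case isolated
    then show ?thesis using u(2) y by blast
  next
    case greatest
    then show ?thesis using \<open>(y, u) \<notin> R'\<close> sub y by blast
  qed
  have "(y, w) \<in> R" if "w \<in> S" for w
  proof (cases "w = y")
    case True
    then show ?thesis using refl y unfolding refl_on_def by blast
  next
    case False
    have "w \<in> S'" "w \<noteq> u" using that u(1) sub by auto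
    then show ?thesis using new[OF _ _ False] u_least res[OF y that] by blast
  qed
  with False show ?thesis by blast
qed

lemma basic_extension_iff:
  assumes ext: "isolated_or_extreme_extension S R S' R'" and anti: "antisym R'"
    and refl: "refl_on S R" and y: "y \<in> S"
    and no_new_below: "\<not> linear_on S R \<or> (\<forall>z\<in>S' - S. \<forall>w\<in>S. (z, w) \<notin> R')"
  shows "basic S' R' y \<longleftrightarrow> basic S R y"
proof -
  have "y \<in> S'" using extension_subset[OF ext] y by blast
  have "\<exists>u. lower_twin S R y u" if "basic S R y" and "lower_twin S' R' y u" for u
  proof -
    have "u \<in> S'" "(u, y) \<in> R'" using that(2) unfolding lower_twin_def by auto
    with lower_twin_restrict[OF ext anti refl y that(2)] no_new_below y
    consider "lower_twin S R y u" | "\<not> linear_on S R" "\<forall>w\<in>S. (y, w) \<in> R"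
      by blast
    then show ?thesis using least_not_basic that(1) by metis
  qed
  then show ?thesis
    using lower_twin_extension[OF ext anti y] forks_below_extension_iff[OF ext y]
      forks_above_extension_iff[OF ext y] y \<open>y \<in> S'\<close>
    unfolding basic_iff by blast
qed

lemma status_preserved_extension:
  assumes ext: "isolated_or_extreme_extension S R S' R'" and anti: "antisym R'"
    and refl: "refl_on S R" and x: "x \<in> S"
    and no_new_below: "\<not> linear_on S R \<or> (\<forall>z\<in>S' - S. \<forall>w\<in>S. (z, w) \<notin> R')"
  shows "status_preserved S R S' R' x"
proof -
  note sub = extension_subset[OF ext] and res = extension_restrict[OF ext]
  have basic: "\<And>y. y \<in> S \<Longrightarrow> basic S' R' y \<longleftrightarrow> basic S R y"
    using basic_extension_iff[OF ext anti refl _ no_new_below] .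
  have "basic S R b \<Longrightarrow> b \<in> S" for b unfolding basic_def by blast
  then show ?thesis
    using basic[OF x] basic res[OF _ x] res[OF x] sub x
    unfolding status_preserved_def upper_def lower_def by (metis subsetD)
qed

lemma status_preserved_disjoint_union:
  assumes A: "vposet A R" and B: "vposet B Q" and disj: "A \<inter> B = {}" and x: "x \<in> A"
  shows "status_preserved A R (A \<union> B) (R \<union> Q) x"
proof (rule status_preserved_extension[OF _ _ vposet_refl_on[OF A] x])
  show "isolated_or_extreme_extension A R (A \<union> B) (R \<union> Q)"
    using disjoint_union_extension[OF vposet_field[OF A] vposet_field[OF B] disj] .
  show "antisym (R \<union> Q)" using vposet_antisym[OF vposet.union[OF A B disj]] .
  show "\<not> linear_on A R \<or> (\<forall>z\<in>A \<union> B - A. \<forall>w\<in>A. (z, w) \<notin> R \<union> Q)"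
    using vposet_field[OF A] vposet_field[OF B] disj by blast
qed

lemma status_preserved_add_top:
  assumes A: "vposet A R" and t: "t \<notin> A" and x: "x \<in> A"
  shows "status_preserved A R (insert t A) (R \<union> insert t A \<times> {t}) x"
proof (rule status_preserved_extension[OF add_top_extension[OF t] _ vposet_refl_on[OF A] x])
  show "antisym (R \<union> insert t A \<times> {t})" using vposet_antisym[OF vposet.add_top[OF A t]] .
  show "\<not> linear_on A R \<or> (\<forall>z\<in>insert t A - A. \<forall>w\<in>A. (z, w) \<notin> R \<union> insert t A \<times> {t})"
    using vposet_field[OF A] t by blast
qed

lemma status_preserved_add_bot:
  assumes A: "vposet A R" and b: "b \<notin> A" and nonlinear: "\<not> linear_on A R" and x: "x \<in> A"
  shows "status_preserved A R (insert b A) (R \<union> {b} \<times> insert b A) x"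
  using status_preserved_extension[OF add_bot_extension[OF b]
      vposet_antisym[OF vposet.add_bot[OF A b]] vposet_refl_on[OF A] x] nonlinear
  by blast

theorem lemma3p6:
  shows
  "(\<forall>(S::'a set) R g. vposet S R \<and> \<not> linear_on S R \<and> g \<in> S \<and> (\<forall>x\<in>S. (x, g) \<in> R)
        \<longrightarrow> \<not> basic S R g)
   \<and> (\<forall>(S::'a set) R l. vposet S R \<and> \<not> linear_on S R \<and> l \<in> S \<and> (\<forall>x\<in>S. (l, x) \<in> R)
        \<longrightarrow> \<not> basic S R l)
   \<and> (\<forall>(S::'a set) R l. vposet S R \<and> linear_on S R \<and> S \<noteq> {} \<and> l \<in> S \<and> (\<forall>x\<in>S. (l, x) \<in> R)
        \<longrightarrow> basic S R l)
   \<and> (\<forall>(A::'a set) R B Q. vposet A R \<and> vposet B Q \<and> A \<inter> B = {}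
        \<longrightarrow> (\<forall>x\<in>A. status_preserved A R (A \<union> B) (R \<union> Q) x)
          \<and> (\<forall>x\<in>B. status_preserved B Q (A \<union> B) (R \<union> Q) x))
   \<and> (\<forall>(A::'a set) R t. vposet A R \<and> t \<notin> A
        \<longrightarrow> (\<forall>x\<in>A. status_preserved A R (insert t A) (R \<union> (insert t A) \<times> {t}) x))
   \<and> (\<forall>(A::'a set) R b. vposet A R \<and> b \<notin> A \<and> \<not> linear_on A R
        \<longrightarrow> (\<forall>x\<in>A. status_preserved A R (insert b A) (R \<union> {b} \<times> (insert b A)) x))"
proof (intro conjI allI impI ballI; elim conjE)
  fix S :: "'a set" and R g
  assume "\<not> linear_on S R" and "\<forall>x\<in>S. (x, g) \<in> R"
  then show "\<not> basic S R g" by (rule greatest_not_basic)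
next
  fix S :: "'a set" and R l
  assume "\<not> linear_on S R" and "\<forall>x\<in>S. (l, x) \<in> R"
  then show "\<not> basic S R l" by (rule least_not_basic)
next
  fix S :: "'a set" and R l
  assume "vposet S R" and "linear_on S R" and "l \<in> S" and "\<forall>x\<in>S. (l, x) \<in> R"
  then show "basic S R l" by (rule least_basic_if_linear[OF vposet_antisym])
next
  fix A B :: "'a set" and R Q x
  assume parts: "vposet A R" "vposet B Q" "A \<inter> B = {}"
  show "x \<in> A \<Longrightarrow> status_preserved A R (A \<union> B) (R \<union> Q) x"
    by (rule status_preserved_disjoint_union[OF parts])
  have "B \<inter> A = {}" using parts(3) by blast
  from status_preserved_disjoint_union[OF parts(2,1) this]
  show "x \<in> B \<Longrightarrow> status_preserved B Q (A \<union> B) (R \<union> Q) x"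
    by (simp add: Un_commute)
next
  fix A :: "'a set" and R t x
  assume "vposet A R" and "t \<notin> A" and "x \<in> A"
  then show "status_preserved A R (insert t A) (R \<union> insert t A \<times> {t}) x"
    by (rule status_preserved_add_top)
next
  fix A :: "'a set" and R b x
  assume "vposet A R" and "b \<notin> A" and "\<not> linear_on A R" and "x \<in> A"
  then show "status_preserved A R (insert b A) (R \<union> {b} \<times> insert b A) x"
    by (rule status_preserved_add_bot)
qed

end
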